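(* For every finite ordered graph $(G,<)$, the order $\prec_B$ is a breadth-first traversal of $G$.
   Context: A finite ordered graph $(G,<)$ is a finite undirected graph with a linear order on its vertices. The canonical breadth-first order $\prec_B$: for vertices $v,w$ let $v_0,w_0$ be the $<$-least vertices of the connected components of $v$ and $w$. Let $<^\star$ be the order on finite sequences of vertices comparing first by length and then lexicographically with respect to $<$. Let $\vec v$ be the $<^\star$-least path from $v_0$ to $v$ (similarly $\vec w$). Then: if $v_0\neq w_0$, $v\prec_B w$ iff $v_0<w_0$; if $v_0=w_0$, $v\prec_B w$ iff $\vec v<^\star\vec w$. A linear order $\prec$ of the vertex set, listing vertices $v_1\prec\dots\prec v_n$, is a breadth-first traversal if for each $i\ge2$, whenever some $v_j$ with $j<i$ has a neighbour outside $\{v_1,\dots,v_{i-1}\}$, $v_i$ is adjacent to $v_{j^*}$ for the least such $j^*$ (i.e. a visiting order of breadth-first search). Equivalently: for all $u\prec v\prec w$ with $u,w$ adjacent, $v$ has a neighbour $x$ with $x\prec v$ and $x\preceq u$. *)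

theory Defs
  imports Main
begin

text \<open>A finite (simple, undirected) graph on vertex set V with adjacency E.
  The linear order on vertices is the order of the type 'a :: linorder.\<close>
definition finite_graph :: "'a set \<Rightarrow> ('a \<Rightarrow> 'a \<Rightarrow> bool) \<Rightarrow> bool" where
  "finite_graph V E \<longleftrightarrow> finite V \<and> (\<forall>x y. E x y \<longrightarrow> x \<in> V \<and> y \<in> V)
     \<and> (\<forall>x y. E x y \<longrightarrow> E y x) \<and> (\<forall>x. \<not> E x x)"

definition comp_min :: "('a::linorder \<Rightarrow> 'a \<Rightarrow> bool) \<Rightarrow> 'a \<Rightarrow> 'a" where
  "comp_min E v = Min {u. E\<^sup>*\<^sup>* v u}"

definition is_path :: "('a \<Rightarrow> 'a \<Rightarrow> bool) \<Rightarrow> 'a list \<Rightarrow> 'a \<Rightarrow> 'a \<Rightarrow> bool" where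
  "is_path E xs u v \<longleftrightarrow> xs \<noteq> [] \<and> hd xs = u \<and> last xs = v
     \<and> (\<forall>i. Suc i < length xs \<longrightarrow> E (xs ! i) (xs ! Suc i))"

definition star_less :: "'a::linorder list \<Rightarrow> 'a list \<Rightarrow> bool" where
  "star_less xs ys \<longleftrightarrow> (xs, ys) \<in> lenlex {(x, y). x < y}"

definition least_path :: "('a::linorder \<Rightarrow> 'a \<Rightarrow> bool) \<Rightarrow> 'a \<Rightarrow> 'a \<Rightarrow> 'a list" where
  "least_path E u v = (THE p. is_path E p u v \<and>
       (\<forall>q. is_path E q u v \<longrightarrow> q = p \<or> star_less p q))"

definition precB :: "('a::linorder \<Rightarrow> 'a \<Rightarrow> bool) \<Rightarrow> 'a \<Rightarrow> 'a \<Rightarrow> bool" where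
  "precB E v w = (let v0 = comp_min E v; w0 = comp_min E w in
     if v0 \<noteq> w0 then v0 < w0
     else star_less (least_path E v0 v) (least_path E w0 w))"

text \<open>A listing v_0,...,v_{n-1} is a BFS visiting order (0-indexed version).\<close>
definition bfs_list :: "('a \<Rightarrow> 'a \<Rightarrow> bool) \<Rightarrow> 'a list \<Rightarrow> bool" where
  "bfs_list E xs \<longleftrightarrow> (\<forall>i < length xs. 1 \<le> i \<longrightarrow>
      (\<exists>j < i. \<exists>u. E (xs ! j) u \<and> u \<notin> set (take i xs)) \<longrightarrow>
      E (xs ! (LEAST j. j < i \<and> (\<exists>u. E (xs ! j) u \<and> u \<notin> set (take i xs)))) (xs ! i))"

definition bf_traversal :: "'a set \<Rightarrow> ('a \<Rightarrow> 'a \<Rightarrow> bool) \<Rightarrow> ('a \<Rightarrow> 'a \<Rightarrow> bool) \<Rightarrow> bool" where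
  "bf_traversal V E prec \<longleftrightarrow>
     strict_linear_order_on V {(v, w). v \<in> V \<and> w \<in> V \<and> prec v w}
     \<and> (\<forall>xs. set xs = V \<and> sorted_wrt prec xs \<longrightarrow> bfs_list E xs)"

end

(*
  Let canonical_path E v be the <*-least path from the root (least vertex) of v's component
  to v, i.e. the paper's vector of v. Since <* is preserved by appending a vertex to both
  sides, the canonical path of a non-root v is the canonical path of a neighbour p of v
  (its parent) extended by v. Now let u < v < w in the order precB with u adjacent to w.
  All three lie in one component and v is not its root, so v has a parent p. If u came
  before p, then canonical_path u @ [w] would be a path to w strictly below
  canonical_path p @ [v] = canonical_path v, hence below canonical_path w, contradicting
  minimality. So v has a neighbour p that does not come after u, which is exactly the
  breadth-first property of every listing sorted by precB.
*)
theory Submission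
  imports Defs "HOL-Library.List_Lenlexorder"
begin

lemma star_less_iff_less: "star_less xs ys \<longleftrightarrow> xs < ys"
  by (simp add: star_less_def list_less_def)

lemma snoc_less_snoc: "xs < ys \<Longrightarrow> xs @ [x] < ys @ [y]"
  unfolding list_less_def by (rule lenlex_append1) auto

lemma less_if_length_less: "length xs < length ys \<Longrightarrow> xs < ys"
  by (simp add: list_less_def lenlex_conv)

lemma not_less_singleton_hd: "xs \<noteq> [] \<Longrightarrow> \<not> xs < [hd (xs :: 'a :: linorder list)]"
  by (cases xs) (auto simp: Cons_less_Cons)

lemma is_path_iff: "is_path E xs u v \<longleftrightarrow> xs \<noteq> [] \<and> hd xs = u \<and> last xs = v \<and> successively E xs"
  by (simp add: is_path_def successively_conv_nth)

lemma is_path_singleton: "is_path E [u] u u"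
  by (simp add: is_path_iff)

lemma is_path_snoc:
  "is_path E (xs @ [w]) u v \<longleftrightarrow>
     v = w \<and> (xs = [] \<and> u = w \<or> is_path E xs u (last xs) \<and> E (last xs) w)"
  by (auto simp: is_path_iff successively_append_iff hd_append)

lemma is_path_snocI: "is_path E xs u v \<Longrightarrow> E v w \<Longrightarrow> is_path E (xs @ [w]) u w"
  by (auto simp: is_path_iff successively_append_iff)

lemma is_path_if_rtranclp: "E\<^sup>*\<^sup>* u v \<Longrightarrow> \<exists>xs. is_path E xs u v"
proof (induction rule: rtranclp_induct)
  case base
  show ?case using is_path_singleton by fast
next
  case (step v w)
  then obtain xs where "is_path E xs u v" by blast
  then have "is_path E (xs @ [w]) u w" using step.hyps(2) by (rule is_path_snocI)
  then show ?case by blast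
qed

lemma set_path_subset: "is_path E xs u v \<Longrightarrow> set xs \<subseteq> insert u {y. \<exists>x. E x y}"
  by (induction xs arbitrary: u rule: induct_list012) (auto simp: is_path_iff)

lemma least_path_eq_Least: "least_path E u v = (LEAST xs. is_path E xs u v)"
  unfolding least_path_def Least_def star_less_iff_less by (metis le_less)

lemma least_path:
  assumes "finite_graph V E" and "is_path E p u v"
  shows is_path_least_path: "is_path E (least_path E u v) u v"
    and least_path_le: "\<And>q. is_path E q u v \<Longrightarrow> least_path E u v \<le> q"
proof -
  \<comment> \<open>Paths no longer than p form a finite set, and longer paths are larger anyway.\<close>
  let ?S = "{q. is_path E q u v \<and> length q \<le> length p}"
  have "finite (insert u {y. \<exists>x. E x y})"
    using assms(1) by (auto simp: finite_graph_def intro: rev_finite_subset)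
  then have "finite {q. set q \<subseteq> insert u {y. \<exists>x. E x y} \<and> length q \<le> length p}"
    by (rule finite_lists_length_le)
  then have "finite ?S"
    by (rule rev_finite_subset) (auto dest: set_path_subset)
  moreover have "p \<in> ?S" using assms(2) by simp
  ultimately have m: "Min ?S \<in> ?S" and Min_le_S: "\<And>q. q \<in> ?S \<Longrightarrow> Min ?S \<le> q"
    using Min_in Min_le by blast+
  have Min_le_paths: "Min ?S \<le> q" if "is_path E q u v" for q
  proof (cases "length q \<le> length p")
    case True
    then show ?thesis using that Min_le_S by blast
  next
    case False
    then have "p < q" by (simp add: less_if_length_less)
    then show ?thesis using Min_le_S \<open>p \<in> ?S\<close> by fastforce
  qed
  have "least_path E u v = Min ?S"
    unfolding least_path_eq_Least using m Min_le_paths by (auto intro: Least_equality)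
  then show "is_path E (least_path E u v) u v" "\<And>q. is_path E q u v \<Longrightarrow> least_path E u v \<le> q"
    using m Min_le_paths by auto
qed

lemma rtranclp_in_vertices:
  assumes "finite_graph V E" and "E\<^sup>*\<^sup>* v u"
  shows "u \<in> insert v V"
  using assms(2) by induction (use assms(1) in \<open>auto simp: finite_graph_def\<close>)

lemma rtranclp_sym: "finite_graph V E \<Longrightarrow> E\<^sup>*\<^sup>* u v \<Longrightarrow> E\<^sup>*\<^sup>* v u"
  by (metis finite_graph_def sympD sympI symp_rtranclp)

lemma comp_min_eq:
  assumes "finite_graph V E" and "E\<^sup>*\<^sup>* u v"
  shows "comp_min E u = comp_min E v"
proof -
  have "E\<^sup>*\<^sup>* v u" using assms by (rule rtranclp_sym)
  with assms(2) have "{w. E\<^sup>*\<^sup>* u w} = {w. E\<^sup>*\<^sup>* v w}"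
    by (blast intro: rtranclp_trans)
  then show ?thesis unfolding comp_min_def by simp
qed

lemma rtranclp_comp_min:
  assumes G: "finite_graph V E"
  shows "E\<^sup>*\<^sup>* (comp_min E v) v"
proof -
  have "{u. E\<^sup>*\<^sup>* v u} \<subseteq> insert v V"
    using rtranclp_in_vertices[OF G] by blast
  then have "finite {u. E\<^sup>*\<^sup>* v u}"
    using G by (auto simp: finite_graph_def intro: finite_subset)
  then have "E\<^sup>*\<^sup>* v (comp_min E v)"
    unfolding comp_min_def using Min_in[of "{u. E\<^sup>*\<^sup>* v u}"] by blast
  with G show ?thesis by (rule rtranclp_sym)
qed

definition canonical_path :: "('a::linorder \<Rightarrow> 'a \<Rightarrow> bool) \<Rightarrow> 'a \<Rightarrow> 'a list" where
  "canonical_path E v = least_path E (comp_min E v) v"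

lemma canonical_path:
  assumes "finite_graph V E"
  shows is_path_canonical_path: "is_path E (canonical_path E v) (comp_min E v) v"
    and canonical_path_le: "\<And>q. is_path E q (comp_min E v) v \<Longrightarrow> canonical_path E v \<le> q"
proof -
  obtain p where "is_path E p (comp_min E v) v"
    using is_path_if_rtranclp[OF rtranclp_comp_min[OF assms]] by blast
  then show "is_path E (canonical_path E v) (comp_min E v) v"
    and "\<And>q. is_path E q (comp_min E v) v \<Longrightarrow> canonical_path E v \<le> q"
    unfolding canonical_path_def using least_path[OF assms] by blast+
qed

lemma precB_iff:
  "precB E v w \<longleftrightarrow> comp_min E v < comp_min E w \<or>
     comp_min E v = comp_min E w \<and> canonical_path E v < canonical_path E w"
  by (auto simp: precB_def canonical_path_def star_less_iff_less Let_def)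

lemma precB_irrefl: "\<not> precB E v v"
  by (simp add: precB_iff)

lemma precB_trans: "precB E u v \<Longrightarrow> precB E v w \<Longrightarrow> precB E u w"
  unfolding precB_iff by (metis order.strict_trans)

lemma precB_total: "finite_graph V E \<Longrightarrow> v \<noteq> w \<Longrightarrow> precB E v w \<or> precB E w v"
proof -
  assume G: "finite_graph V E" and "v \<noteq> w"
  then have "canonical_path E v \<noteq> canonical_path E w"
    using is_path_canonical_path[OF G] by (metis is_path_iff)
  then show ?thesis unfolding precB_iff by (meson linorder_neqE)
qed

lemma not_precB_comp_min:
  assumes G: "finite_graph V E"
  shows "\<not> precB E u (comp_min E u)"
proof
  let ?c = "comp_min E u"
  assume "precB E u ?c"
  have c_root: "comp_min E ?c = ?c"
    by (rule comp_min_eq[OF G rtranclp_comp_min[OF G]])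
  have u_path: "is_path E (canonical_path E u) ?c u"
    by (rule is_path_canonical_path[OF G])
  have "canonical_path E u < canonical_path E ?c"
    using \<open>precB E u ?c\<close> c_root by (simp add: precB_iff)
  also have "canonical_path E ?c \<le> [?c]"
    using canonical_path_le[OF G, of "[?c]" ?c] c_root by (simp add: is_path_singleton)
  finally have "canonical_path E u < [?c]" .
  moreover have "canonical_path E u \<noteq> []" and "hd (canonical_path E u) = ?c"
    using u_path by (simp_all add: is_path_iff)
  ultimately show False
    using not_less_singleton_hd[of "canonical_path E u"] by simp
qed

lemma canonical_path_parent:
  assumes G: "finite_graph V E" and not_root: "v \<noteq> comp_min E v"
  obtains p where "E p v" and "canonical_path E v = canonical_path E p @ [v]"
proof -
  let ?c = "comp_min E v"
  have v_path: "is_path E (canonical_path E v) ?c v"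
    by (rule is_path_canonical_path[OF G])
  then obtain B where B: "canonical_path E v = B @ [v]"
    by (metis append_butlast_last_id is_path_iff)
  with v_path not_root have B_path: "is_path E B ?c (last B)" and "E (last B) v"
    by (auto simp: is_path_snoc)
  define p where "p = last B"
  have "comp_min E p = ?c"
    using comp_min_eq[OF G] \<open>E (last B) v\<close> unfolding p_def by blast
  then have p_path: "is_path E (canonical_path E p) ?c p" and "canonical_path E p \<le> B"
    using is_path_canonical_path[OF G, of p] canonical_path_le[OF G, of B p] B_path p_def by simp_all
  moreover have "\<not> canonical_path E p < B"
  proof
    assume "canonical_path E p < B"
    then have "canonical_path E p @ [v] < canonical_path E v"
      unfolding B by (rule snoc_less_snoc)
    moreover have "is_path E (canonical_path E p @ [v]) ?c v"
      using is_path_snocI[OF p_path] \<open>E (last B) v\<close> unfolding p_def by simp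
    then have "canonical_path E v \<le> canonical_path E p @ [v]"
      by (rule canonical_path_le[OF G])
    ultimately show False by simp
  qed
  ultimately have "canonical_path E v = canonical_path E p @ [v]"
    using B by simp
  with \<open>E (last B) v\<close> show thesis unfolding p_def by (rule that)
qed

lemma precB_early_neighbour:
  assumes G: "finite_graph V E" and uv: "precB E u v" and vw: "precB E v w" and "E u w"
  shows "\<exists>x. E x v \<and> \<not> precB E u x"
proof -
  have "comp_min E u = comp_min E w"
    using comp_min_eq[OF G] \<open>E u w\<close> by blast
  with uv vw have cu: "comp_min E u = comp_min E v" and cw: "comp_min E w = comp_min E v"
    unfolding precB_iff by auto
  with uv have "v \<noteq> comp_min E v"
    using not_precB_comp_min[OF G, of u] by auto
  with G obtain p where "E p v" and v_path: "canonical_path E v = canonical_path E p @ [v]"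
    by (rule canonical_path_parent)
  have "\<not> precB E u p"
  proof
    assume "precB E u p"
    moreover have "comp_min E p = comp_min E v"
      using comp_min_eq[OF G] \<open>E p v\<close> by blast
    ultimately have up: "canonical_path E u < canonical_path E p"
      using cu by (simp add: precB_iff)
    have "is_path E (canonical_path E u @ [w]) (comp_min E w) w"
      using is_path_snocI[OF is_path_canonical_path[OF G, of u] \<open>E u w\<close>] cu cw by simp
    then have w_le: "canonical_path E w \<le> canonical_path E u @ [w]"
      by (rule canonical_path_le[OF G])
    have "canonical_path E u @ [w] < canonical_path E v"
      unfolding v_path using up by (rule snoc_less_snoc)
    also have "\<dots> < canonical_path E w"
      using vw cw by (simp add: precB_iff)
    also note w_le
    finally show False by simp
  qed
  with \<open>E p v\<close> show ?thesis by blast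
qed

lemma nth_notin_set_take: "distinct xs \<Longrightarrow> i < length xs \<Longrightarrow> xs ! i \<notin> set (take i xs)"
  by (metis distinct_append disjoint_iff id_take_nth_drop list.set_intros(1))

lemma bfs_list_if_early_neighbours:
  fixes prec :: "'a \<Rightarrow> 'a \<Rightarrow> bool"
  assumes sorted: "sorted_wrt prec xs" and "distinct xs"
    and edges: "\<And>x y. E x y \<Longrightarrow> x \<in> set xs \<and> y \<in> set xs"
    and early: "\<And>u v w. prec u v \<Longrightarrow> prec v w \<Longrightarrow> E u w \<Longrightarrow> \<exists>x. E x v \<and> \<not> prec u x"
  shows "bfs_list E xs"
  unfolding bfs_list_def
proof (intro allI impI)
  fix i assume i: "i < length xs"
  let ?Q = "\<lambda>j. j < i \<and> (\<exists>u. E (xs ! j) u \<and> u \<notin> set (take i xs))"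
  define J where "J = (LEAST j. ?Q j)"
  assume "\<exists>j<i. \<exists>u. E (xs ! j) u \<and> u \<notin> set (take i xs)"
  then have "\<exists>j. ?Q j" by blast
  then have "?Q J" unfolding J_def by (rule LeastI_ex)
  then obtain u where "J < i" and "E (xs ! J) u" and u_later: "u \<notin> set (take i xs)"
    by blast
  then obtain k where k: "k < length xs" "xs ! k = u"
    using edges by (metis in_set_conv_nth)
  have "i \<le> k"
  proof (rule ccontr)
    assume "\<not> i \<le> k"
    then have "xs ! k \<in> set (take i xs)"
      using k(1) by (auto simp: in_set_conv_nth intro!: exI[of _ k])
    with k(2) u_later show False by simp
  qed
  show "E (xs ! J) (xs ! i)"
  proof (cases "k = i")
    case True
    with k \<open>E (xs ! J) u\<close> show ?thesis by simp
  next
    case False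
    with \<open>i \<le> k\<close> have "prec (xs ! J) (xs ! i)" and "prec (xs ! i) (xs ! k)"
      using sorted \<open>J < i\<close> i k(1) by (auto simp: sorted_wrt_iff_nth_less)
    with early obtain x where "E x (xs ! i)" and not_after: "\<not> prec (xs ! J) x"
      using k(2) \<open>E (xs ! J) u\<close> by blast
    then obtain m where m: "m < length xs" "xs ! m = x"
      using edges by (metis in_set_conv_nth)
    have "m \<le> J"
      using not_after sorted m i \<open>J < i\<close> by (metis not_le sorted_wrt_nth_less)
    then have "?Q m"
      using \<open>J < i\<close> \<open>E x (xs ! i)\<close> m(2) nth_notin_set_take[OF \<open>distinct xs\<close> i] by auto
    then have "J \<le> m" unfolding J_def by (rule Least_le)
    with \<open>m \<le> J\<close> m(2) \<open>E x (xs ! i)\<close> show ?thesis by simp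
  qed
qed

theorem lemma5:
  fixes V :: "'a::linorder set" and E :: "'a \<Rightarrow> 'a \<Rightarrow> bool"
  assumes "finite_graph V E"
  shows "bf_traversal V E (precB E)"
proof -
  have "strict_linear_order_on V {(v, w). v \<in> V \<and> w \<in> V \<and> precB E v w}"
    using precB_irrefl precB_trans precB_total[OF assms]
    by (auto simp: strict_linear_order_on_def irrefl_def trans_def total_on_def)
  moreover have "bfs_list E xs" if "set xs = V" and sorted: "sorted_wrt (precB E) xs" for xs
  proof (rule bfs_list_if_early_neighbours[OF sorted])
    show "distinct xs"
      using sorted by (induction xs) (auto simp: precB_irrefl)
    show "\<And>x y. E x y \<Longrightarrow> x \<in> set xs \<and> y \<in> set xs"
      using assms \<open>set xs = V\<close> by (simp add: finite_graph_def)
  qed (rule precB_early_neighbour[OF assms])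
  ultimately show ?thesis unfolding bf_traversal_def by blast
qed

end
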